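(* Let $N\ge1$, $d\ge1$, and $\mathbf{q}=(q_1,\dots,q_N)\in(\mathbb{R}^d)^N$ with $q_i\ne q_j$ for $i\ne j$. Then for all $\gamma\in(0,1]$ and $s\ge0$, $$\sum_{i=1}^N\Big\langle\sum_{j\ne i}\frac{q_i-q_j}{|q_i-q_j|^\gamma},\sum_{k\ne i}\frac{q_i-q_k}{|q_i-q_k|^{s+1}}\Big\rangle\ge 2\sum_{1\le i<j\le N}\frac{1}{|q_i-q_j|^{s+\gamma-1}}.$$ *)

theory Defs
  imports "HOL-Analysis.Analysis"
begin

end

theory Submission
  imports Defs
begin

(* Write \<Phi>\<^sub>g u = |u| powr (-g) *\<^sub>R u. Expanding the inner products, the terms with j = k
   contribute |q i - q j| powr (1 - s - \<gamma>), each unordered pair twice. The remaining terms,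
   indexed by triples of distinct indices, pair up under (i, j, k) \<mapsto> (k, j, i) to
   |q i - q k| powr (-s-1) * (\<Phi>\<^sub>\<gamma> u - \<Phi>\<^sub>\<gamma> v) \<bullet> (u - v) with u = q i - q j, v = q k - q j.
   This is nonnegative because \<Phi>\<^sub>\<gamma> is a monotone map for \<gamma> \<le> 1: by Cauchy-Schwarz,
   (\<Phi>\<^sub>\<gamma> u - \<Phi>\<^sub>\<gamma> v) \<bullet> (u - v) \<ge> (|u| - |v|) * (|u| powr (1 - \<gamma>) - |v| powr (1 - \<gamma>)) \<ge> 0. *)

definition radial_scale :: "real \<Rightarrow> 'a::real_normed_vector \<Rightarrow> 'a" where
  "radial_scale g u = (1 / norm u powr g) *\<^sub>R u"

lemma radial_scale_minus: "radial_scale g (- u) = - radial_scale g u"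
  by (simp add: radial_scale_def)

lemma inner_radial_scale_self:
  fixes u :: "'a::real_inner"
  shows "radial_scale g u \<bullet> radial_scale h u = 1 / norm u powr (g + h - 2)"
proof (cases "u = 0")
  case False
  then have "norm u > 0" by simp
  have "radial_scale g u \<bullet> radial_scale h u = norm u powr 2 / (norm u powr g * norm u powr h)"
    by (simp add: radial_scale_def power2_norm_eq_inner[symmetric] powr_numeral)
  also have "\<dots> = 1 / norm u powr (g + h - 2)"
    by (simp add: powr_add powr_diff)
  finally show ?thesis .
qed (simp add: radial_scale_def)

lemma diff_mult_diff_powr_nonneg:
  fixes x y g :: real
  assumes "0 \<le> x" "0 \<le> y" "g \<le> 1"
  shows "0 \<le> (x - y) * (x powr (1 - g) - y powr (1 - g))"
proof (cases "x \<le> y")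
  case True
  then have "x powr (1 - g) \<le> y powr (1 - g)" using assms by (intro powr_mono2) auto
  with True show ?thesis by (simp add: mult_nonpos_nonpos)
next
  case False
  then have "y powr (1 - g) \<le> x powr (1 - g)" using assms by (intro powr_mono2) auto
  with False show ?thesis by simp
qed

lemma radial_scale_monotone:
  fixes u v :: "'a::real_inner"
  assumes "g \<le> 1"
  shows "0 \<le> (radial_scale g u - radial_scale g v) \<bullet> (u - v)"
proof -
  define x y where "x = norm u" and "y = norm v"
  define c where "c = 1 / x powr g + 1 / y powr g"
  have scale_eq: "z / z powr g = z powr (1 - g)" if "0 \<le> z" for z :: real
    using that by (simp add: powr_diff)
  have "0 \<le> (x - y) * (x / x powr g - y / y powr g)"
    using diff_mult_diff_powr_nonneg[of x y g] assms by (simp add: x_def y_def scale_eq)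
  also have "\<dots> = x * (x / x powr g) + y * (y / y powr g) - c * (x * y)"
    by (simp add: c_def algebra_simps diff_divide_distrib)
  also have "\<dots> \<le> x * (x / x powr g) + y * (y / y powr g) - c * (u \<bullet> v)"
    using norm_cauchy_schwarz[of u v] by (simp add: c_def x_def y_def mult_left_mono)
  also have "\<dots> = (radial_scale g u - radial_scale g v) \<bullet> (u - v)"
  proof -
    have "u \<bullet> u = x * x" "v \<bullet> v = y * y"
      unfolding x_def y_def by (simp_all flip: power2_eq_square add: power2_norm_eq_inner)
    then show ?thesis
      unfolding radial_scale_def inner_diff_left inner_diff_right inner_scaleR_left
      by (simp add: c_def inner_commute[of v u] flip: x_def y_def) (simp add: field_simps)
  qed
  finally show ?thesis .
qed

lemma sum_nonneg_by_involution:
  fixes f :: "'a \<Rightarrow> 'b::linordered_ab_group_add"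
  assumes "\<And>x. x \<in> S \<Longrightarrow> \<sigma> x \<in> S" and "\<And>x. x \<in> S \<Longrightarrow> \<sigma> (\<sigma> x) = x"
    and "\<And>x. x \<in> S \<Longrightarrow> 0 \<le> f x + f (\<sigma> x)"
  shows "0 \<le> sum f S"
proof -
  have "sum f S = sum (f \<circ> \<sigma>) S"
    by (rule sum.reindex_bij_witness[of S \<sigma> \<sigma>]) (use assms in auto)
  then have "sum f S + sum f S = (\<Sum>x\<in>S. f x + f (\<sigma> x))"
    by (simp add: sum.distrib)
  also have "\<dots> \<ge> 0"
    by (rule sum_nonneg) (rule assms(3))
  finally show ?thesis by simp
qed

lemma sum_offdiagonal_symmetric:
  fixes h :: "'a::linorder \<Rightarrow> 'a \<Rightarrow> 'b::semiring_1"
  assumes "finite I" and "\<And>i j. h i j = h j i"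
  shows "(\<Sum>i\<in>I. \<Sum>j\<in>I - {i}. h i j) = 2 * (\<Sum>i\<in>I. \<Sum>j\<in>{j\<in>I. i < j}. h i j)"
proof -
  have split: "(\<Sum>j\<in>I - {i}. h i j) = (\<Sum>j\<in>{j\<in>I. i < j}. h i j) + (\<Sum>j\<in>{j\<in>I. j < i}. h i j)"
    for i
  proof -
    have "(\<Sum>j\<in>I - {i}. h i j) = (\<Sum>j\<in>{j\<in>I. i < j} \<union> {j\<in>I. j < i}. h i j)"
      by (rule sum.cong) auto
    also have "\<dots> = (\<Sum>j\<in>{j\<in>I. i < j}. h i j) + (\<Sum>j\<in>{j\<in>I. j < i}. h i j)"
      using assms(1) by (intro sum.union_disjoint) auto
    finally show ?thesis .
  qed
  have "(\<Sum>i\<in>I. \<Sum>j\<in>{j\<in>I. j < i}. h i j) = (\<Sum>j\<in>I. \<Sum>i\<in>{i\<in>I. j < i}. h i j)"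
    using assms(1) by (intro sum.swap_restrict)
  also have "\<dots> = (\<Sum>i\<in>I. \<Sum>j\<in>{j\<in>I. i < j}. h i j)"
    by (intro sum.cong refl) (rule assms(2))
  finally show ?thesis
    by (simp add: split sum.distrib mult_2)
qed

lemma sum_inner_sum_radial_scale_ge:
  fixes q :: "'i \<Rightarrow> 'a::real_inner"
  assumes "finite I" and "g \<le> 1"
  shows "(\<Sum>i\<in>I. \<Sum>j\<in>I - {i}. 1 / norm (q i - q j) powr (g + h - 2))
    \<le> (\<Sum>i\<in>I. (\<Sum>j\<in>I - {i}. radial_scale g (q i - q j)) \<bullet> (\<Sum>k\<in>I - {i}. radial_scale h (q i - q k)))"
proof -
  define w where "w i j k = radial_scale g (q i - q j) \<bullet> radial_scale h (q i - q k)" for i j k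
  have expand: "(\<Sum>j\<in>I - {i}. radial_scale g (q i - q j)) \<bullet> (\<Sum>k\<in>I - {i}. radial_scale h (q i - q k))
      = (\<Sum>j\<in>I - {i}. w i j j) + (\<Sum>j\<in>I - {i}. \<Sum>k\<in>I - {i} - {j}. w i j k)" for i
  proof -
    have "(\<Sum>j\<in>I - {i}. radial_scale g (q i - q j)) \<bullet> (\<Sum>k\<in>I - {i}. radial_scale h (q i - q k))
        = (\<Sum>j\<in>I - {i}. w i j j + (\<Sum>k\<in>I - {i} - {j}. w i j k))"
      unfolding inner_sum_left unfolding inner_sum_right w_def
      using assms(1) by (intro sum.cong refl) (simp add: sum.remove)
    then show ?thesis by (simp add: sum.distrib)
  qed
  have pair: "0 \<le> w i j k + w k j i" for i j k
  proof -
    have "w i j k + w k j i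
        = (radial_scale g (q i - q j) - radial_scale g (q k - q j)) \<bullet> radial_scale h (q i - q k)"
      using radial_scale_minus[of h "q i - q k"] by (simp add: w_def inner_diff_left)
    also have "\<dots> = (1 / norm (q i - q k) powr h)
        * ((radial_scale g (q i - q j) - radial_scale g (q k - q j)) \<bullet> ((q i - q j) - (q k - q j)))"
      by (simp add: radial_scale_def)
    also have "0 \<le> \<dots>"
      by (intro mult_nonneg_nonneg radial_scale_monotone assms(2)) simp
    finally show ?thesis by simp
  qed
  have offdiagonal: "0 \<le> (\<Sum>i\<in>I. \<Sum>j\<in>I - {i}. \<Sum>k\<in>I - {i} - {j}. w i j k)"
  proof -
    have "(\<Sum>i\<in>I. \<Sum>j\<in>I - {i}. \<Sum>k\<in>I - {i} - {j}. w i j k)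
        = (\<Sum>(i, j, k)\<in>(SIGMA i:I. SIGMA j:I - {i}. I - {i} - {j}). w i j k)"
      using assms(1) by (simp add: sum.Sigma split_def)
    also have "0 \<le> \<dots>"
      by (rule sum_nonneg_by_involution[where \<sigma> = "\<lambda>(i, j, k). (k, j, i)"]) (auto intro: pair)
    finally show ?thesis .
  qed
  have "w i j j = 1 / norm (q i - q j) powr (g + h - 2)" for i j
    by (simp add: w_def inner_radial_scale_self)
  with expand offdiagonal show ?thesis
    by (simp add: sum.distrib)
qed

theorem lemmaA1:
  fixes N :: nat and q :: "nat \<Rightarrow> real ^ 'd" and \<gamma> s :: real
  assumes "N \<ge> 1"
    and "\<And>i j. i \<in> {1..N} \<Longrightarrow> j \<in> {1..N} \<Longrightarrow> i \<noteq> j \<Longrightarrow> q i \<noteq> q j"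
    and "0 < \<gamma>" and "\<gamma> \<le> 1" and "s \<ge> 0"
  shows "(\<Sum>i\<in>{1..N}.
            (\<Sum>j\<in>{1..N} - {i}. (1 / norm (q i - q j) powr \<gamma>) *\<^sub>R (q i - q j)) \<bullet>
            (\<Sum>k\<in>{1..N} - {i}. (1 / norm (q i - q k) powr (s + 1)) *\<^sub>R (q i - q k)))
         \<ge> 2 * (\<Sum>i\<in>{1..N}. \<Sum>j\<in>{i<..N}. 1 / norm (q i - q j) powr (s + \<gamma> - 1))"
proof -
  define e where "e = s + \<gamma> - 1"
  have e_eq: "e = \<gamma> + (s + 1) - 2"
    by (simp add: e_def)
  have "{j \<in> {1..N}. i < j} = {i<..N}" if "i \<in> {1..N}" for i
    using that by auto
  then have "2 * (\<Sum>i\<in>{1..N}. \<Sum>j\<in>{i<..N}. 1 / norm (q i - q j) powr e)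
      = (\<Sum>i\<in>{1..N}. \<Sum>j\<in>{1..N} - {i}. 1 / norm (q i - q j) powr e)"
    by (simp add: sum_offdiagonal_symmetric norm_minus_commute)
  also have "\<dots> \<le> (\<Sum>i\<in>{1..N}. (\<Sum>j\<in>{1..N} - {i}. radial_scale \<gamma> (q i - q j))
      \<bullet> (\<Sum>k\<in>{1..N} - {i}. radial_scale (s + 1) (q i - q k)))"
    unfolding e_eq using \<open>\<gamma> \<le> 1\<close> by (intro sum_inner_sum_radial_scale_ge) simp
  finally show ?thesis
    by (simp only: e_def radial_scale_def)
qed

end
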